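(* Let $\alpha$ and $F_\alpha$ be as in the context. Then $F_\alpha$ is exact (with respect to Lebesgue measure $\lambda$, equivalently with respect to the $\lambda$-equivalent invariant measure $\nu_\alpha$ with density $\sum_n (t_n/a_n)\mathbbm 1_{A_n}$).
   Context: Let $\mathcal U=[0,1]$ with Borel $\sigma$-algebra $\mathcal B$ and Lebesgue measure $\lambda$. $\alpha=\{A_n:n\in\mathbb N\}$ is a countable partition of $\mathcal U$ (up to the point $0$) into left-open, right-closed intervals of positive length, ordered from right to left starting with $A_1$, accumulating only at $0$; $a_n:=\lambda(A_n)$, $t_n:=\sum_{k\ge n}a_k$, $A_n=(t_{n+1},t_n]$. $F_\alpha(x)=(1-x)/a_1$ on $A_1$, $F_\alpha(x)=a_{n-1}(x-t_{n+1})/a_n+t_n$ on $A_n$ ($n\ge2$), $F_\alpha(0)=0$. A non-singular transformation $T$ of a $\sigma$-finite measure space $(\mathcal U,\mathcal B,\mu)$ is exact if for each $B\in\bigcap_{n\in\mathbb N}T^{-n}(\mathcal B)$ either $\mu(B)=0$ or $\mu(\mathcal U\setminus B)=0$. *)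

theory Defs
  imports "HOL-Analysis.Analysis"
begin

text \<open>The partition is given by the lengths a n (n >= 1) of the intervals A_n; the
value a 0 is irrelevant. t_n = sum_{k >= n} a_k and A_n = (t_{n+1}, t_n].\<close>

definition tail :: "(nat \<Rightarrow> real) \<Rightarrow> nat \<Rightarrow> real" where
  "tail a n = (\<Sum>k. a (k + n))"

definition part_int :: "(nat \<Rightarrow> real) \<Rightarrow> nat \<Rightarrow> real set" where
  "part_int a n = {tail a (Suc n)<..tail a n}"

definition F_alpha :: "(nat \<Rightarrow> real) \<Rightarrow> real \<Rightarrow> real" where
  "F_alpha a x =
     (if x = 0 then 0
      else if x \<in> part_int a 1 then (1 - x) / a 1
      else (let n = (THE n. n \<ge> 2 \<and> x \<in> part_int a n)
            in a (n - 1) * (x - tail a (Suc n)) / a n + tail a n))"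

definition U_meas :: "real measure" where
  "U_meas = restrict_space lborel {0..1}"

definition nonsingular :: "'a measure \<Rightarrow> ('a \<Rightarrow> 'a) \<Rightarrow> bool" where
  "nonsingular M T \<longleftrightarrow> T \<in> measurable M M \<and>
     (\<forall>A\<in>sets M. emeasure M (T -` A \<inter> space M) = 0 \<longleftrightarrow> emeasure M A = 0)"

definition exact_transf :: "'a measure \<Rightarrow> ('a \<Rightarrow> 'a) \<Rightarrow> bool" where
  "exact_transf M T \<longleftrightarrow> nonsingular M T \<and>
     (\<forall>B. (\<forall>n. \<exists>C\<in>sets M. B = (T ^^ n) -` C \<inter> space M) \<longrightarrow>
          emeasure M B = 0 \<or> emeasure M (space M - B) = 0)"

end

theory Submission
  imports Defs
begin

text \<open>A tail set B is of the form F^-n(D_n) for every n, and since F maps [0,1] onto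
itself the sets D_n form a chain D_n = F^-1(D_(n+1)). The k-th iterate of F maps A_k affinely
onto [0,1), so \<lambda>(D_n \<inter> A_k) = a_k \<lambda>(D_(n+k)): the masses \<lambda>(D_n) form a bounded harmonic
sequence for the probability weights (a_k) and are therefore a constant c. The same
self-similarity applied to the distribution functions v \<mapsto> \<lambda>(D_n \<inter> ]-\<infinity>,v]) shows that
their deviation from c v shrinks by the factor max(a_1, 1 - a_1) < 1 from one level to the
next, so \<lambda>(D_0 \<inter> X) = c \<lambda>([0,1] \<inter> X) for every Borel set X. Taking X = D_0 gives c = c^2.\<close>

section \<open>Bounded harmonic sequences\<close>

lemma harmonic_near_sup_propagates:
  fixes p D :: "nat \<Rightarrow> real"
  assumes p_nonneg: "\<And>k. 0 \<le> p k" and p0: "0 < p 0" and p_sums: "p sums 1"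
    and harmonic: "\<And>n. (\<lambda>k. p k * D (n + Suc k)) sums D n"
    and le_S: "\<And>n. D n \<le> S" and near: "S - e < D m"
  shows "S - e / p 0 ^ i < D (m + i)"
proof (induction i)
  case 0
  then show ?case using near by simp
next
  case (Suc i)
  let ?e = "e / p 0 ^ i"
  have "(\<lambda>k. p (Suc k) * D (m + i + Suc (Suc k))) sums (D (m + i) - p 0 * D (m + Suc i))"
    using harmonic[of "m + i"] by (subst sums_Suc_iff) simp
  moreover have "(\<lambda>k. p (Suc k)) sums (1 - p 0)"
    using p_sums by (subst sums_Suc_iff) simp
  then have "(\<lambda>k. p (Suc k) * S) sums ((1 - p 0) * S)"
    by (rule sums_mult2)
  ultimately have "D (m + i) - p 0 * D (m + Suc i) \<le> (1 - p 0) * S"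
    by (rule sums_le[rotated]) (simp add: mult_left_mono p_nonneg le_S)
  with Suc.IH have "p 0 * (S - ?e / p 0) < p 0 * D (m + Suc i)"
    using p0 by (simp add: algebra_simps)
  then have "S - ?e / p 0 < D (m + Suc i)"
    using p0 by (simp only: mult_less_cancel_left_pos)
  then show ?case by (simp add: mult.commute)
qed

lemma bounded_harmonic_mono:
  fixes p phi :: "nat \<Rightarrow> real"
  assumes p_nonneg: "\<And>k. 0 \<le> p k" and p0: "0 < p 0" and p_sums: "p sums 1"
    and harmonic: "\<And>n. (\<lambda>k. p k * phi (n + Suc k)) sums phi n"
    and bounded: "\<And>n. \<bar>phi n\<bar> \<le> M"
  shows "phi n \<le> phi (Suc n)"
proof (rule ccontr)
  \<comment> \<open>The differences D are again harmonic. If their supremum S were positive, values close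
      to S would persist along K consecutive indices, and the telescoping sum of D over
      them would exceed the bound 2 M on phi m - phi (m + K).\<close>
  define D where "D j = phi j - phi (Suc j)" for j
  assume "\<not> phi n \<le> phi (Suc n)"
  then have "0 < D n" by (simp add: D_def)
  have harmonic_D: "(\<lambda>k. p k * D (j + Suc k)) sums D j" for j
    using sums_diff[OF harmonic[of j] harmonic[of "Suc j"]] by (simp add: D_def right_diff_distrib)
  have "bdd_above (range D)"
  proof (rule bdd_aboveI[of _ "2 * M"], clarify)
    fix j show "D j \<le> 2 * M"
      using bounded[of j] bounded[of "Suc j"] by (simp add: D_def abs_le_iff)
  qed
  define S where "S = (SUP j. D j)"
  have le_S: "D j \<le> S" for j
    unfolding S_def using \<open>bdd_above (range D)\<close> by (rule cSUP_upper[rotated]) simp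
  have "0 < S" using le_S[of n] \<open>0 < D n\<close> by simp
  obtain K :: nat where K: "4 * M < real K * S"
    using reals_Archimedean3[OF \<open>0 < S\<close>] by blast
  define e where "e = p 0 ^ K * S / 2"
  have "0 < e" using p0 \<open>0 < S\<close> by (simp add: e_def)
  then obtain m where near: "S - e < D m"
    using less_cSUP_iff[OF _ \<open>bdd_above (range D)\<close>, of "S - e"] by (auto simp: S_def)
  have "p 0 \<le> 1"
    using sums_le[OF _ sums_single[of 0 p] p_sums] p_nonneg by (simp split: if_splits)
  have "S / 2 < D (m + i)" if "i < K" for i
  proof -
    have "p 0 ^ K \<le> p 0 ^ i"
      using that p0 \<open>p 0 \<le> 1\<close> by (intro power_decreasing) auto
    then have "e / p 0 ^ i \<le> S / 2"
      using p0 \<open>0 < S\<close> by (simp add: e_def divide_simps)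
    then show ?thesis
      using harmonic_near_sup_propagates[OF p_nonneg p0 p_sums harmonic_D le_S near, of i] by simp
  qed
  then have "(\<Sum>i<K. S / 2) \<le> (\<Sum>i<K. D (m + i))"
    by (intro sum_mono) (simp add: less_imp_le)
  also have "\<dots> = phi m - phi (m + K)"
    by (induction K) (simp_all add: D_def)
  also have "\<dots> \<le> 2 * M"
    using bounded[of m] bounded[of "m + K"] by (simp add: abs_le_iff)
  finally show False using K by simp
qed

lemma bounded_harmonic_const:
  fixes p phi :: "nat \<Rightarrow> real"
  assumes p_nonneg: "\<And>k. 0 \<le> p k" and p0: "0 < p 0" and p_sums: "p sums 1"
    and harmonic: "\<And>n. (\<lambda>k. p k * phi (n + Suc k)) sums phi n"
    and bounded: "\<And>n. \<bar>phi n\<bar> \<le> M"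
  shows "phi n = phi 0"
proof -
  have "phi j \<le> phi (Suc j)" for j
    by (rule bounded_harmonic_mono[OF assms])
  moreover have "- phi j \<le> - phi (Suc j)" for j
    using sums_minus[OF harmonic] bounded
    by (intro bounded_harmonic_mono[OF p_nonneg p0 p_sums, where M = M]) auto
  ultimately have "phi (Suc j) = phi j" for j
    by (simp add: order_antisym)
  then show ?thesis by (induction n) auto
qed

section \<open>Lebesgue measure on the unit interval\<close>

lemma emeasure_lborel_affine_vimage:
  fixes c s :: real
  assumes "c \<noteq> 0" and "S \<in> sets borel"
  shows "emeasure lborel S = ennreal \<bar>c\<bar> * emeasure lborel ((\<lambda>x. s + c * x) -` S)"
proof -
  have "(\<lambda>x. s + c * x) -` S \<in> sets borel"
    using assms(2) by (rule measurable_sets_borel[rotated]) simp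
  then have "(\<integral>\<^sup>+x. indicator S (s + c * x) \<partial>lborel) = emeasure lborel ((\<lambda>x. s + c * x) -` S)"
    by (simp flip: nn_integral_indicator add: indicator_def)
  moreover have "emeasure lborel S = ennreal \<bar>c\<bar> * (\<integral>\<^sup>+x. indicator S (s + c * x) \<partial>lborel)"
    using nn_integral_real_affine[of "indicator S" c s] assms by simp
  ultimately show ?thesis by simp
qed

lemma fmeasurable_lborel_subset_interval:
  fixes S :: "real set"
  assumes "S \<subseteq> {a..b}" and "S \<in> sets borel"
  shows "S \<in> fmeasurable lborel"
  using fmeasurableI2[OF fmeasurable_cbox[of a b]] assms by simp

lemma measure_eqI_atMost:
  fixes M N :: "real measure"
  assumes sets: "sets M = sets borel" "sets N = sets borel"
    and finite: "\<And>x. emeasure M {..x} \<noteq> \<infinity>"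
    and eq: "\<And>x. emeasure M {..x} = emeasure N {..x}"
  shows "M = N"
proof (rule measure_eqI_generator_eq_countable[where E = "range atMost" and A = "range (\<lambda>i. {..real i})"])
  show "Int_stable (range (atMost :: real \<Rightarrow> _))"
    by (auto simp: Int_stable_def intro: range_eqI[where x = "min _ _"])
  show "sets M = sigma_sets UNIV (range atMost)" "sets N = sigma_sets UNIV (range atMost)"
    unfolding sets by (simp_all add: borel_eq_atMost)
  show "(\<Union> (range (\<lambda>i. {..real i}))) = UNIV"
    by (auto intro: real_arch_simple)
qed (use finite eq in auto)

lemma measure_Int_eq_scaled_unit_interval:
  fixes B X :: "real set"
  assumes B: "B \<in> sets borel" "B \<subseteq> {0..1}" and "0 \<le> c" and X: "X \<in> sets borel"
    and cdf: "\<And>v. v \<in> {0..1} \<Longrightarrow> measure lborel (B \<inter> {..v}) = c * v"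
  shows "measure lborel (B \<inter> X) = c * measure lborel ({0..1} \<inter> X)"
proof -
  have fin: "emeasure lborel (B \<inter> Y) = ennreal (measure lborel (B \<inter> Y))" if "Y \<in> sets borel" for Y
    by (rule emeasure_eq_measure2, rule fmeasurable_lborel_subset_interval[of _ 0 1]) (use B that in auto)
  have "density lborel (indicator B) = density lborel (\<lambda>x. ennreal c * indicator {0..1} x)"
  proof (rule measure_eqI_atMost)
    fix v :: real
    show "emeasure (density lborel (indicator B)) {..v} \<noteq> \<infinity>"
      using fin[of "{..v}"] B by (simp add: emeasure_density Int_commute indicator_inter_arith[symmetric])
    consider "v < 0" | "v \<in> {0..1}" | "1 < v" by force
    then have "emeasure lborel (B \<inter> {..v}) = ennreal c * emeasure lborel ({0..1} \<inter> {..v})"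
    proof cases
      case 1
      then have "B \<inter> {..v} = {}" "{0..1} \<inter> {..v} = {}" using B by auto
      then show ?thesis by simp
    next
      case 2
      then have "{0..1} \<inter> {..v} = {0..v}" by auto
      then show ?thesis using fin[of "{..v}"] cdf[OF 2] 2 \<open>0 \<le> c\<close> by (simp add: ennreal_mult)
    next
      case 3
      then have "B \<inter> {..v} = B \<inter> {..1}" "{0..1} \<inter> {..v} = {0..1}" using B by auto
      then show ?thesis using fin[of "{..1}"] cdf[of 1] by simp
    qed
    then show "emeasure (density lborel (indicator B)) {..v} =
               emeasure (density lborel (\<lambda>x. ennreal c * indicator {0..1} x)) {..v}"
      using B by (simp add: emeasure_density nn_integral_cmult Int_commute mult.assoc indicator_inter_arith[symmetric])
  qed simp_all
  then have "emeasure (density lborel (indicator B)) X =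
             emeasure (density lborel (\<lambda>x. ennreal c * indicator {0..1} x)) X"
    by simp
  then have "emeasure lborel (B \<inter> X) = ennreal c * emeasure lborel (X \<inter> {0..1})"
    using B X by (simp add: emeasure_density nn_integral_cmult Int_commute mult.assoc indicator_inter_arith[symmetric])
  moreover have "emeasure lborel (X \<inter> {0..1}) = ennreal (measure lborel (X \<inter> {0..1}))"
    by (rule emeasure_eq_measure2, rule fmeasurable_lborel_subset_interval[of _ 0 1]) (use X in auto)
  ultimately show ?thesis
    using fin[OF X] \<open>0 \<le> c\<close> by (simp add: ennreal_mult'[symmetric] Int_commute)
qed

lemma measure_Un_disjoint:
  assumes "A \<in> fmeasurable M" "B \<in> fmeasurable M" "A \<inter> B = {}"
  shows "measure M (A \<union> B) = measure M A + measure M B"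
  using assms by (intro measure_Union) (simp_all add: fmeasurableD fmeasurableD2)

lemma space_U_meas: "space U_meas = {0..1}"
  by (simp add: U_meas_def space_restrict_space)

lemma sets_U_meas: "S \<in> sets U_meas \<longleftrightarrow> S \<in> sets borel \<and> S \<subseteq> {0..1}"
  unfolding U_meas_def by (subst sets_restrict_space_iff) auto

lemma emeasure_U_meas: "S \<subseteq> {0..1} \<Longrightarrow> emeasure U_meas S = emeasure lborel S"
  unfolding U_meas_def by (rule emeasure_restrict_space) auto

lemma U_meas_null_or_conull:
  assumes S: "S \<in> sets borel" "S \<subseteq> {0..1}"
    and zero_or_one: "measure lborel S = 0 \<or> measure lborel S = 1"
  shows "emeasure U_meas S = 0 \<or> emeasure U_meas (space U_meas - S) = 0"
proof -
  have "S \<in> fmeasurable lborel" "{0..1} - S \<in> fmeasurable lborel"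
    using S by (auto intro: fmeasurable_lborel_subset_interval[of _ 0 1])
  moreover have "measure lborel ({0..1} - S) = 1 - measure lborel S"
    using S by (simp add: measure_Diff)
  ultimately show ?thesis
    using zero_or_one S by (auto simp: space_U_meas emeasure_U_meas emeasure_eq_measure2)
qed

section \<open>Tail sets of a surjective map\<close>

lemma funpow_image_eq:
  assumes "f ` S = S"
  shows "(f ^^ n) ` S = S"
  by (induction n) (simp, metis assms funpow_Suc_right image_comp)

lemma tail_set_vimage_chain:
  assumes surj: "f ` S = S"
    and B: "\<And>n. B = (f ^^ n) -` C n \<inter> S" and C_sub: "\<And>n. C n \<subseteq> S"
  shows "C n = f -` C (Suc n) \<inter> S"
proof -
  have "y \<in> C n \<longleftrightarrow> f y \<in> C (Suc n)" if "y \<in> S" for y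
  proof -
    obtain x where x: "x \<in> S" "(f ^^ n) x = y"
      using funpow_image_eq[OF surj, of n] \<open>y \<in> S\<close> by (metis imageE)
    have "y \<in> C n \<longleftrightarrow> x \<in> B" using B[of n] x by auto
    also have "\<dots> \<longleftrightarrow> f y \<in> C (Suc n)"
      using B[of "Suc n"] x by (auto simp del: funpow.simps simp: funpow_Suc_right funpow_swap1)
    finally show ?thesis .
  qed
  then show ?thesis using C_sub[of n] by auto
qed

section \<open>The interval map\<close>

locale interval_partition =
  fixes a :: "nat \<Rightarrow> real"
  assumes length_pos: "\<And>n. 1 \<le> n \<Longrightarrow> 0 < a n"
    and lengths_sums: "(\<lambda>k. a (Suc k)) sums 1"
begin

abbreviation "t \<equiv> tail a"
abbreviation "A \<equiv> part_int a"
abbreviation "F \<equiv> F_alpha a"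

lemma summable_lengths: "summable a"
  using lengths_sums summable_Suc_iff sums_summable by blast

lemma tail_Suc: "t n = a n + t (Suc n)"
  using suminf_split_head[OF summable_lengths[THEN summable_iff_shift[of _ n, THEN iffD2]]]
  by (simp add: tail_def)

lemma tail_one: "t 1 = 1"
  using sums_unique[OF lengths_sums] by (simp add: tail_def)

lemma tail_two: "t 2 = 1 - a 1"
  using tail_Suc[of 1, unfolded Suc_1] tail_one by simp

lemma tail_pos: "1 \<le> n \<Longrightarrow> 0 < t n"
  unfolding tail_def
  by (rule suminf_pos[OF summable_lengths[THEN summable_iff_shift[of _ n, THEN iffD2]]])
     (simp add: length_pos)

lemma tail_antimono:
  assumes "1 \<le> n" "n \<le> m"
  shows "t m \<le> t n"
  using assms(2)
proof (induction m rule: dec_induct)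
  case (step m)
  then show ?case using tail_Suc[of m] length_pos[of m] assms(1) by simp
qed simp

lemma part_subset: "1 \<le> n \<Longrightarrow> A n \<subseteq> {0<..1}"
  using tail_antimono[of 1 n] tail_one tail_pos[of "Suc n"] by (auto simp: part_int_def)

lemma part_disjoint: "1 \<le> n \<Longrightarrow> n < m \<Longrightarrow> A n \<inter> A m = {}"
  using tail_antimono[of "Suc n" m] by (auto simp: part_int_def)

lemma part_unique: "1 \<le> n \<Longrightarrow> 1 \<le> m \<Longrightarrow> x \<in> A n \<Longrightarrow> x \<in> A m \<Longrightarrow> n = m"
  using part_disjoint[of n m] part_disjoint[of m n] by (cases n m rule: linorder_cases) auto

lemma part_cover:
  assumes "x \<in> {0<..1}"
  obtains n where "1 \<le> n" "x \<in> A n"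
proof -
  obtain N where "\<forall>n\<ge>N. \<bar>t n\<bar> < x"
    using suminf_exist_split[OF _ summable_lengths, of x] assms by (auto simp: tail_def)
  then have "t (Suc N) < x" by (simp add: abs_less_iff)
  then have ex: "\<exists>n. t (Suc n) < x" by blast
  define n where "n = (LEAST n. t (Suc n) < x)"
  have below: "t (Suc n) < x"
    unfolding n_def using ex by (rule LeastI_ex)
  have "n \<noteq> 0" using below assms tail_one by (cases n) auto
  then have "x \<le> t n"
    using not_less_Least[of "n - 1" "\<lambda>n. t (Suc n) < x"] by (simp add: n_def)
  with below \<open>n \<noteq> 0\<close> show ?thesis by (intro that[of n]) (auto simp: part_int_def)
qed

lemma part_iff_branch:
  assumes "1 \<le> k"
  shows "x \<in> A k \<longleftrightarrow> (t k - x) / a k \<in> {0..<1}"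
  using length_pos[OF assms] tail_Suc[of k]
  by (auto simp: part_int_def zero_le_divide_iff pos_divide_less_eq)

lemma F_part_one: "x \<in> A 1 \<Longrightarrow> F x = (1 - x) / a 1"
  using part_subset[of 1] by (auto simp: F_alpha_def)

lemma F_part:
  assumes "2 \<le> n" "x \<in> A n"
  shows "F x = a (n - 1) * (x - t (Suc n)) / a n + t n"
proof -
  have "(THE m. 2 \<le> m \<and> x \<in> A m) = n"
    using assms part_unique[of _ n x] by (intro the_equality) auto
  moreover have "x \<noteq> 0" "x \<notin> A 1"
    using assms part_subset[of n] part_unique[of n 1 x] by auto
  ultimately show ?thesis by (simp add: F_alpha_def Let_def)
qed

lemma F_part_into_prev:
  assumes "2 \<le> n" "x \<in> A n"
  shows "F x \<in> A (n - 1)"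
proof -
  have pos: "0 < a n" "0 < a (n - 1)" using length_pos assms(1) by auto
  have "0 < x - t (Suc n)" "x - t (Suc n) \<le> a n"
    using assms(2) tail_Suc[of n] by (auto simp: part_int_def)
  then have "0 < a (n - 1) * (x - t (Suc n)) / a n" "a (n - 1) * (x - t (Suc n)) / a n \<le> a (n - 1)"
    using pos by (simp_all add: pos_divide_le_eq mult_left_mono)
  moreover have "t (n - 1) = a (n - 1) + t n" "Suc (n - 1) = n"
    using tail_Suc[of "n - 1"] assms(1) by auto
  ultimately show ?thesis
    using F_part[OF assms] by (auto simp: part_int_def)
qed

lemma funpow_F_part:
  assumes "1 \<le> k" "x \<in> A k"
  shows "(F ^^ k) x = (t k - x) / a k"
  using assms
proof (induction k arbitrary: x rule: dec_induct)
  case base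
  then show ?case using F_part_one tail_one by simp
next
  case (step k)
  have "(F ^^ Suc k) x = (t k - F x) / a k"
    using step F_part_into_prev[of "Suc k" x] by (simp add: funpow_Suc_right del: funpow.simps)
  also have "\<dots> = (t (Suc k) - x) / a (Suc k)"
    using F_part[of "Suc k" x] step tail_Suc[of k] tail_Suc[of "Suc k"] length_pos[of k] length_pos[of "Suc k"]
    by (simp add: field_simps)
  finally show ?case .
qed

lemma F_image: "F ` {0..1} = {0..1}"
proof
  show "F ` {0..1} \<subseteq> {0..1}"
  proof clarify
    fix x :: real assume x: "x \<in> {0..1}"
    show "F x \<in> {0..1}"
    proof (cases "x = 0")
      case False
      then obtain n where n: "1 \<le> n" "x \<in> A n" using x part_cover[of x] by auto
      show ?thesis
      proof (cases "n = 1")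
        case True
        then have "F x = (t 1 - x) / a 1" using funpow_F_part[OF n] by simp
        then show ?thesis using part_iff_branch[of 1 x] n True by simp
      next
        case False
        then have "F x \<in> A (n - 1)" "A (n - 1) \<subseteq> {0<..1}"
          using n F_part_into_prev[of n x] part_subset[of "n - 1"] by simp_all
        then show ?thesis by auto
      qed
    qed (simp add: F_alpha_def)
  qed
  show "{0..1} \<subseteq> F ` {0..1}"
  proof
    fix y :: real assume y: "y \<in> {0..1}"
    show "y \<in> F ` {0..1}"
    proof (cases "y = 1")
      case True
      have "t 2 \<in> A 2"
        using tail_Suc[of 2] length_pos[of 2] by (simp add: part_int_def)
      then have "F (t 2) = y"
        using F_part[of 2 "t 2"] tail_Suc[of 2] length_pos[of 2] tail_two True by simp
      moreover have "t 2 \<in> {0..1}" using part_subset[of 2] \<open>t 2 \<in> A 2\<close> by auto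
      ultimately show ?thesis by (metis image_eqI)
    next
      case False
      then have x: "1 - a 1 * y \<in> A 1"
        using y part_iff_branch[of 1] tail_one length_pos[of 1] by simp
      then have "F (1 - a 1 * y) = y"
        using F_part_one length_pos[of 1] by simp
      moreover have "1 - a 1 * y \<in> {0..1}" using x part_subset[of 1] by auto
      ultimately show ?thesis by (metis image_eqI)
    qed
  qed
qed

lemma F_affine_on_part:
  assumes "1 \<le> k"
  obtains s c where "c \<noteq> 0" "\<And>x. x \<in> A k \<Longrightarrow> F x = s + c * x"
proof (cases "k = 1")
  case True
  show ?thesis
  proof (rule that)
    show "- 1 / a 1 \<noteq> 0" using length_pos[of 1] by simp
    show "F x = 1 / a 1 + - 1 / a 1 * x" if "x \<in> A k" for x
      using F_part_one that True by (simp add: diff_divide_distrib)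
  qed
next
  case False
  then have k: "2 \<le> k" "1 \<le> k - 1" using assms by simp_all
  show ?thesis
  proof (rule that)
    show "a (k - 1) / a k \<noteq> 0" using length_pos[of k] length_pos[OF k(2)] k by simp
    show "F x = (t k - a (k - 1) * t (Suc k) / a k) + a (k - 1) / a k * x" if "x \<in> A k" for x
      using F_part[OF k(1) that] length_pos[of k] k by (simp add: field_simps)
  qed
qed

lemma F_measurable: "F \<in> U_meas \<rightarrow>\<^sub>M U_meas"
proof -
  have "F \<in> borel_measurable U_meas"
  proof (rule measurable_piecewise_restrict[where C = "insert {0} (A ` {1..})"])
    show "countable (insert {0} (A ` {1..}))" by simp
    show "\<Omega> \<inter> space U_meas \<in> sets U_meas" if "\<Omega> \<in> insert {0} (A ` {1..})" for \<Omega>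
      using that by (auto simp: sets_U_meas space_U_meas part_int_def)
    show "space U_meas \<subseteq> \<Union> (insert {0} (A ` {1..}))"
    proof
      fix x assume "x \<in> space U_meas"
      then consider "x = 0" | "x \<in> {0<..1}" by (force simp: space_U_meas)
      then show "x \<in> \<Union> (insert {0} (A ` {1..}))"
      proof cases
        case 2
        then obtain n where "1 \<le> n" "x \<in> A n" by (rule part_cover)
        then show ?thesis by blast
      qed simp
    qed
    show "F \<in> borel_measurable (restrict_space U_meas \<Omega>)" if \<Omega>: "\<Omega> \<in> insert {0} (A ` {1..})" for \<Omega>
    proof -
      consider "\<Omega> = {0}" | k where "1 \<le> k" "\<Omega> = A k" using \<Omega> by auto
      then show ?thesis
      proof cases
        case 1
        then show ?thesis
          by (subst measurable_cong[where g = "\<lambda>_. 0"]) (auto simp: space_restrict_space F_alpha_def)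
      next
        case 2
        then obtain s c where "\<And>x. x \<in> A k \<Longrightarrow> F x = s + c * x"
          using F_affine_on_part by blast
        then show ?thesis
          by (subst measurable_cong[where g = "\<lambda>x. s + c * x"])
             (auto simp: 2 space_restrict_space U_meas_def intro!: measurable_restrict_space1)
      qed
    qed
  qed
  then show ?thesis
    using F_image unfolding U_meas_def
    by (intro measurable_restrict_space2) (auto simp: space_restrict_space)
qed

lemma emeasure_branch_vimage:
  assumes k: "1 \<le> k" and E: "E \<in> sets borel" "E \<subseteq> {0..1}"
  shows "emeasure lborel {x \<in> A k. (t k - x) / a k \<in> E} = ennreal (a k) * emeasure lborel E"
proof -
  have pos: "0 < a k" using length_pos[OF k] .
  have "(\<lambda>x. (t k - x) / a k) -` E \<in> sets borel"
    using E(1) by (rule measurable_sets_borel[rotated]) simp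
  then have "A k \<inter> (\<lambda>x. (t k - x) / a k) -` E \<in> sets borel"
    by (simp add: part_int_def)
  moreover have "A k \<inter> (\<lambda>x. (t k - x) / a k) -` E = {x \<in> A k. (t k - x) / a k \<in> E}"
    by auto
  ultimately have "emeasure lborel {x \<in> A k. (t k - x) / a k \<in> E}
      = ennreal \<bar>- a k\<bar> * emeasure lborel ((\<lambda>y. t k + - a k * y) -` {x \<in> A k. (t k - x) / a k \<in> E})"
    using pos by (intro emeasure_lborel_affine_vimage) simp_all
  also have "(\<lambda>y. t k + - a k * y) -` {x \<in> A k. (t k - x) / a k \<in> E} = E - {1}"
  proof (rule set_eqI)
    fix y
    have "t k + - a k * y \<in> A k \<longleftrightarrow> y \<in> {0..<1}"
      using part_iff_branch[OF k, of "t k + - a k * y"] pos by simp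
    then show "y \<in> (\<lambda>y. t k + - a k * y) -` {x \<in> A k. (t k - x) / a k \<in> E} \<longleftrightarrow> y \<in> E - {1}"
      using pos E(2) by auto
  qed
  also have "emeasure lborel (E - {1}) = emeasure lborel E"
    using E(1) by (rule_tac emeasure_Diff_null_set) (simp_all add: finite_imp_null_set_lborel)
  finally show ?thesis using pos by simp
qed

lemma measure_branch_vimage:
  assumes k: "1 \<le> k" and E: "E \<in> sets borel" "E \<subseteq> {0..1}"
  shows "measure lborel {x \<in> A k. (t k - x) / a k \<in> E} = a k * measure lborel E"
proof -
  have "E \<in> fmeasurable lborel"
    by (rule fmeasurable_lborel_subset_interval[OF E(2,1)])
  then have "emeasure lborel {x \<in> A k. (t k - x) / a k \<in> E} = ennreal (a k * measure lborel E)"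
    using emeasure_branch_vimage[OF assms] length_pos[OF k]
    by (simp add: emeasure_eq_measure2 ennreal_mult)
  then show ?thesis
    using length_pos[OF k] by (simp add: measure_def)
qed

lemma F_vimage_part_null:
  assumes k: "1 \<le> k" and S: "S \<in> null_sets lborel" "S \<subseteq> {0..1}"
  shows "F -` S \<inter> A k \<in> null_sets lborel"
proof -
  obtain s c where "c \<noteq> 0" and F_eq: "\<And>x. x \<in> A k \<Longrightarrow> F x = s + c * x"
    using F_affine_on_part[OF k] by blast
  have "S \<in> sets borel" using S(1) by auto
  then have "0 = ennreal \<bar>c\<bar> * emeasure lborel ((\<lambda>x. s + c * x) -` S)"
    using emeasure_lborel_affine_vimage[OF \<open>c \<noteq> 0\<close>, of S s] S(1) by (simp add: null_setsD1)
  moreover have "(\<lambda>x. s + c * x) -` S \<in> sets borel"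
    using \<open>S \<in> sets borel\<close> by (rule measurable_sets_borel[rotated]) simp
  ultimately have null: "(\<lambda>x. s + c * x) -` S \<in> null_sets lborel"
    using \<open>c \<noteq> 0\<close> by (simp add: null_sets_def)
  have "F -` S \<inter> A k \<in> sets lborel"
  proof -
    have "F -` S \<inter> {0..1} \<in> sets borel"
      using measurable_sets[OF F_measurable, of S] S(2) \<open>S \<in> sets borel\<close>
      by (simp add: sets_U_meas space_U_meas)
    then have "(F -` S \<inter> {0..1}) \<inter> A k \<in> sets borel" by (simp add: part_int_def)
    moreover have "(F -` S \<inter> {0..1}) \<inter> A k = F -` S \<inter> A k" using part_subset[OF k] by auto
    ultimately show ?thesis by simp
  qed
  moreover have "F -` S \<inter> A k \<subseteq> (\<lambda>x. s + c * x) -` S"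
    using F_eq by auto
  ultimately show ?thesis
    by (rule null_sets_subset[OF null])
qed

lemma F_nonsingular: "nonsingular U_meas F"
  unfolding nonsingular_def
proof (intro conjI ballI F_measurable)
  fix S assume "S \<in> sets U_meas"
  then have S: "S \<in> sets borel" "S \<subseteq> {0..1}" by (simp_all add: sets_U_meas)
  have pre: "F -` S \<inter> {0..1} \<in> sets borel"
    using measurable_sets[OF F_measurable \<open>S \<in> sets U_meas\<close>] by (simp add: sets_U_meas space_U_meas)
  have "emeasure lborel (F -` S \<inter> {0..1}) = 0 \<longleftrightarrow> emeasure lborel S = 0"
  proof
    assume null: "emeasure lborel (F -` S \<inter> {0..1}) = 0"
    have "{x \<in> A 1. (t 1 - x) / a 1 \<in> S} \<subseteq> F -` S \<inter> {0..1}"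
    proof clarify
      fix x assume x: "x \<in> A 1" "(t 1 - x) / a 1 \<in> S"
      have "F x = (t 1 - x) / a 1" by (simp only: F_part_one[OF x(1)] tail_one)
      with x(2) have "F x \<in> S" by simp
      moreover have "x \<in> {0..1}" using x(1) part_subset[of 1] by auto
      ultimately show "x \<in> F -` S \<inter> {0..1}" by simp
    qed
    then have "emeasure lborel {x \<in> A 1. (t 1 - x) / a 1 \<in> S} \<le> emeasure lborel (F -` S \<inter> {0..1})"
      by (rule emeasure_mono) (use pre in simp)
    then have "emeasure lborel {x \<in> A 1. (t 1 - x) / a 1 \<in> S} = 0"
      using null by simp
    then show "emeasure lborel S = 0"
      using emeasure_branch_vimage[of 1 S] S length_pos[of 1] by simp
  next
    assume "emeasure lborel S = 0"
    then have "S \<in> null_sets lborel" using S by (simp add: null_sets_def)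
    then have parts: "(\<Union>k\<in>{1..}. F -` S \<inter> A k) \<in> null_sets lborel"
      using F_vimage_part_null S(2) by (rule_tac null_sets_UN') simp_all
    have zero: "{0::real} \<in> null_sets lborel"
      by (rule finite_imp_null_set_lborel) simp
    have null: "{0} \<union> (\<Union>k\<in>{1..}. F -` S \<inter> A k) \<in> null_sets lborel"
      by (rule null_sets.Un[OF zero parts])
    have sub: "F -` S \<inter> {0..1} \<subseteq> {0} \<union> (\<Union>k\<in>{1..}. F -` S \<inter> A k)"
    proof
      fix x assume x: "x \<in> F -` S \<inter> {0..1}"
      show "x \<in> {0} \<union> (\<Union>k\<in>{1..}. F -` S \<inter> A k)"
      proof (cases "x = 0")
        case False
        then obtain k where "1 \<le> k" "x \<in> A k" using x part_cover[of x] by auto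
        then show ?thesis using x by auto
      qed simp
    qed
    have "F -` S \<inter> {0..1} \<in> sets lborel" using pre by simp
    then have "F -` S \<inter> {0..1} \<in> null_sets lborel"
      by (rule null_sets_subset[OF null _ sub])
    then show "emeasure lborel (F -` S \<inter> {0..1}) = 0"
      by (rule null_setsD1)
  qed
  then show "emeasure U_meas (F -` S \<inter> space U_meas) = 0 \<longleftrightarrow> emeasure U_meas S = 0"
    using S by (simp add: space_U_meas emeasure_U_meas)
qed

lemma length_le_contraction:
  assumes "1 \<le> k"
  shows "a k \<le> max (a 1) (1 - a 1)"
proof (cases "k = 1")
  case False
  have "a k \<le> t k" using tail_Suc[of k] tail_pos[of "Suc k"] by simp
  also have "t k \<le> t 2" using tail_antimono[of 2 k] False assms by simp
  finally show ?thesis using tail_two by simp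
qed simp

lemma contraction_lt_one: "max (a 1) (1 - a 1) < 1"
  using length_pos[of 1] tail_pos[of 2] tail_two by simp

end

section \<open>Pullback chains of the interval map\<close>

locale tail_chain = interval_partition +
  fixes D :: "nat \<Rightarrow> real set"
  assumes D_borel: "D n \<in> sets borel"
    and D_subset: "D n \<subseteq> {0..1}"
    and D_pullback: "D n = F -` D (Suc n) \<inter> {0..1}"
begin

abbreviation "mass \<equiv> measure lborel (D 0)"

lemma D_Int_fmeasurable: "X \<in> sets borel \<Longrightarrow> D n \<inter> X \<in> fmeasurable lborel"
  using D_subset[of n] D_borel[of n] by (intro fmeasurable_lborel_subset_interval[of _ 0 1]) auto

lemma D_fmeasurable: "D n \<in> fmeasurable lborel"
  using D_Int_fmeasurable[of UNIV n] by simp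

lemma measure_D_Int_le_one: "X \<in> sets borel \<Longrightarrow> measure lborel (D n \<inter> X) \<le> 1"
  using measure_mono_fmeasurable[of "D n \<inter> X" "{0..1}" lborel] D_subset[of n] D_borel[of n]
    fmeasurable_lborel_subset_interval[of "{0..1}" 0 1]
  by auto

lemma D_funpow_pullback: "D n = (F ^^ k) -` D (n + k) \<inter> {0..1}"
proof (induction k)
  case 0
  then show ?case using D_subset[of n] by auto
next
  case (Suc k)
  have "(F ^^ k) x \<in> {0..1}" if "x \<in> {0..1}" for x
    using that funpow_image_eq[OF F_image, of k] by blast
  then show ?case using Suc D_pullback[of "n + k"] by auto
qed

lemma D_part: "1 \<le> k \<Longrightarrow> D n \<inter> A k = {x \<in> A k. (t k - x) / a k \<in> D (n + k)}"
  using D_funpow_pullback[of n k] part_subset[of k] funpow_F_part[of k] by auto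

lemma measure_D_part: "1 \<le> k \<Longrightarrow> measure lborel (D n \<inter> A k) = a k * measure lborel (D (n + k))"
  using D_part measure_branch_vimage D_borel D_subset by simp

lemma measure_D_harmonic: "(\<lambda>k. a (Suc k) * measure lborel (D (n + Suc k))) sums measure lborel (D n)"
proof -
  have "(\<lambda>k. measure lborel (D n \<inter> A (Suc k))) sums measure lborel (\<Union>k. D n \<inter> A (Suc k))"
  proof (rule measure_UNION)
    show "range (\<lambda>k. D n \<inter> A (Suc k)) \<subseteq> sets lborel"
      using D_borel by (auto simp: part_int_def)
    show "disjoint_family (\<lambda>k. D n \<inter> A (Suc k))"
      unfolding disjoint_family_on_def
    proof clarify
      fix i j :: nat assume "i \<noteq> j"
      then show "(D n \<inter> A (Suc i)) \<inter> (D n \<inter> A (Suc j)) = {}"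
        using part_unique[of "Suc i" "Suc j"] by auto
    qed
    show "emeasure lborel (\<Union>k. D n \<inter> A (Suc k)) \<noteq> \<infinity>"
      using D_Int_fmeasurable[of "\<Union>k. A (Suc k)" n] by (simp add: part_int_def fmeasurableD2)
  qed
  moreover have "(\<Union>k. D n \<inter> A (Suc k)) = D n - {0}"
  proof
    show "(\<Union>k. D n \<inter> A (Suc k)) \<subseteq> D n - {0}"
      using part_subset by fastforce
    show "D n - {0} \<subseteq> (\<Union>k. D n \<inter> A (Suc k))"
    proof
      fix x assume x: "x \<in> D n - {0}"
      then have "x \<in> {0<..1}" using D_subset[of n] by force
      then obtain k where "1 \<le> k" "x \<in> A k" by (rule part_cover)
      then show "x \<in> (\<Union>k. D n \<inter> A (Suc k))"
        using x by (cases k) auto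
    qed
  qed
  moreover have "measure lborel (D n - {0}) = measure lborel (D n)"
    using D_borel[of n] by (simp add: measure_Diff_null_set finite_imp_null_set_lborel)
  ultimately show ?thesis
    by (simp add: measure_D_part)
qed

lemma measure_D_const: "measure lborel (D n) = mass"
proof (rule bounded_harmonic_const[where p = "\<lambda>k. a (Suc k)" and M = 1])
  show "\<And>k. 0 \<le> a (Suc k)" "0 < a (Suc 0)" using length_pos by (simp_all add: less_imp_le)
  show "(\<lambda>k. a (Suc k)) sums 1" by (rule lengths_sums)
  show "(\<lambda>k. a (Suc k) * measure lborel (D (m + Suc k))) sums measure lborel (D m)" for m
    by (rule measure_D_harmonic)
  show "\<bar>measure lborel (D m)\<bar> \<le> 1" for m
    using measure_D_Int_le_one[of UNIV m] by simp
qed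

abbreviation "cdf n v \<equiv> measure lborel (D n \<inter> {..v})"

lemma cdf_tail:
  assumes "1 \<le> k"
  shows "cdf n (t k) = mass * t k"
  using assms
proof (induction k rule: dec_induct)
  case base
  have "D n \<inter> {..t 1} = D n" using D_subset[of n] tail_one by auto
  then show ?case using measure_D_const[of n] tail_one by simp
next
  case (step k)
  have "D n \<inter> {..t k} = (D n \<inter> {..t (Suc k)}) \<union> (D n \<inter> A k)"
    using tail_Suc[of k] length_pos[OF step(1)] by (auto simp: part_int_def)
  moreover have "(D n \<inter> {..t (Suc k)}) \<inter> (D n \<inter> A k) = {}"
    by (auto simp: part_int_def)
  ultimately have "cdf n (t k) = cdf n (t (Suc k)) + measure lborel (D n \<inter> A k)"
    by (simp add: measure_Un_disjoint D_Int_fmeasurable part_int_def)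
  also have "measure lborel (D n \<inter> A k) = a k * mass"
    using measure_D_part[OF step(1)] measure_D_const by simp
  finally have "cdf n (t (Suc k)) = mass * t k - a k * mass"
    using step(3) by linarith
  then show ?case
    using tail_Suc[of k] by (simp add: algebra_simps)
qed

lemma measure_D_atLeast: "measure lborel (D m \<inter> {w..}) = mass - cdf m w"
proof -
  have "D m \<inter> {..w} = (D m \<inter> {..<w}) \<union> (D m \<inter> {w})" by auto
  then have "cdf m w = measure lborel ((D m \<inter> {..<w}) \<union> (D m \<inter> {w}))"
    by (simp only:)
  also have "\<dots> = measure lborel (D m \<inter> {..<w})"
    using D_borel[of m] by (intro measure_Un_null_set) (simp_all add: finite_imp_null_set_lborel)
  finally have "cdf m w = measure lborel (D m \<inter> {..<w})" .
  moreover have "D m \<inter> {w..} = D m - (D m \<inter> {..<w})" by auto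
  ultimately show ?thesis
    using D_fmeasurable[of m] D_borel[of m] measure_D_const[of m]
    by (simp add: measure_Diff fmeasurableD2)
qed

lemma cdf_self_similar:
  assumes k: "1 \<le> k" and v: "v \<in> A k"
  defines "w \<equiv> (t k - v) / a k"
  shows "cdf n v - mass * v = - a k * (cdf (n + k) w - mass * w)"
proof -
  have pos: "0 < a k" using length_pos[OF k] .
  have le_iff: "x \<le> v \<longleftrightarrow> w \<le> (t k - x) / a k" for x
    unfolding w_def using pos by (simp add: divide_le_cancel)
  \<comment> \<open>D n \<inter> ]-\<infinity>,v] splits at t (Suc k); the k-th iterate of F maps the part inside
      A k decreasingly onto D (n + k) \<inter> [w,1).\<close>
  have upper: "D n \<inter> A k \<inter> {..v} = {x \<in> A k. (t k - x) / a k \<in> D (n + k) \<inter> {w..}}"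
    using D_part[OF k, of n] le_iff by auto
  have "D n \<inter> {..v} = (D n \<inter> {..t (Suc k)}) \<union> (D n \<inter> A k \<inter> {..v})"
    using v by (auto simp: part_int_def)
  moreover have "(D n \<inter> {..t (Suc k)}) \<inter> (D n \<inter> A k \<inter> {..v}) = {}"
    by (auto simp: part_int_def)
  ultimately have "cdf n v = cdf n (t (Suc k)) + measure lborel (D n \<inter> A k \<inter> {..v})"
    by (simp add: measure_Un_disjoint D_Int_fmeasurable part_int_def Int_assoc)
  also have "measure lborel (D n \<inter> A k \<inter> {..v}) = a k * (mass - cdf (n + k) w)"
    unfolding upper using D_borel[of "n + k"] D_subset[of "n + k"]
    by (subst measure_branch_vimage[OF k]) (auto simp: measure_D_atLeast)
  also have "cdf n (t (Suc k)) = mass * t (Suc k)"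
    by (rule cdf_tail) (use k in simp)
  finally have cdf_v: "cdf n v = mass * t (Suc k) + a k * (mass - cdf (n + k) w)" .
  have mass_v: "mass * v = mass * t (Suc k) + a k * mass - a k * (mass * w)"
    unfolding w_def using pos tail_Suc[of k] by (simp add: field_simps)
  show ?thesis
    unfolding cdf_v mass_v by (simp add: algebra_simps)
qed

lemma cdf_deviation_bound:
  assumes "v \<in> {0..1}"
  shows "\<bar>cdf n v - mass * v\<bar> \<le> max (a 1) (1 - a 1) ^ j"
  using assms
proof (induction j arbitrary: n v)
  case 0
  have "0 \<le> mass" "mass \<le> 1" "cdf n v \<le> 1"
    using measure_D_Int_le_one[of UNIV 0] measure_D_Int_le_one[of "{..v}" n] by simp_all
  with 0 have "0 \<le> mass * v" "mass * v \<le> 1"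
    by (simp_all add: mult_le_one)
  moreover have "0 \<le> cdf n v" by (rule measure_nonneg)
  ultimately show ?case
    using \<open>cdf n v \<le> 1\<close> unfolding abs_le_iff power_0 by linarith
next
  case (Suc j)
  show ?case
  proof (cases "v = 0")
    case True
    have "D n \<inter> {..0} \<in> null_sets lborel"
      using D_subset[of n] D_borel[of n]
      by (intro null_sets_subset[OF finite_imp_null_set_lborel[of "{0}"]]) auto
    then show ?thesis
      using True length_pos[of 1] by (simp add: measure_eq_0_null_sets)
  next
    case False
    then have "v \<in> {0<..1}" using Suc.prems by auto
    then obtain k where k: "1 \<le> k" "v \<in> A k" by (rule part_cover)
    define w where "w = (t k - v) / a k"
    have "w \<in> {0..1}"
      using part_iff_branch[OF k(1), of v] k(2) by (auto simp: w_def)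
    have "\<bar>cdf n v - mass * v\<bar> = a k * \<bar>cdf (n + k) w - mass * w\<bar>"
      using cdf_self_similar[OF k, of n] length_pos[OF k(1)] by (simp add: w_def abs_mult)
    also have "\<dots> \<le> max (a 1) (1 - a 1) * max (a 1) (1 - a 1) ^ j"
      using Suc.IH[OF \<open>w \<in> {0..1}\<close>] length_le_contraction[OF k(1)] length_pos[OF k(1)]
      by (intro mult_mono) auto
    finally show ?thesis by simp
  qed
qed

lemma cdf_linear:
  assumes "v \<in> {0..1}"
  shows "cdf n v = mass * v"
proof (rule ccontr)
  assume "cdf n v \<noteq> mass * v"
  then obtain j where "max (a 1) (1 - a 1) ^ j < \<bar>cdf n v - mass * v\<bar>"
    using real_arch_pow_inv[OF _ contraction_lt_one] by fastforce
  with cdf_deviation_bound[OF assms, of n j] show False by simp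
qed

lemma measure_D_zero_or_one: "mass = 0 \<or> mass = 1"
proof -
  have "measure lborel (D 0 \<inter> D 0) = mass * measure lborel ({0..1} \<inter> D 0)"
    by (rule measure_Int_eq_scaled_unit_interval[OF D_borel D_subset measure_nonneg D_borel cdf_linear])
  moreover have "{0..1} \<inter> D 0 = D 0" using D_subset[of 0] by auto
  ultimately have "mass = mass * mass" by simp
  then show ?thesis by (metis mult_cancel_left1)
qed

end

theorem lemma2p6:
  fixes a :: "nat \<Rightarrow> real"
  assumes pos: "\<And>n. n \<ge> 1 \<Longrightarrow> a n > 0"
    and total: "(\<lambda>k. a (Suc k)) sums 1"
  shows "exact_transf U_meas (F_alpha a)"
proof -
  interpret interval_partition a
    using pos total by unfold_locales auto
  show ?thesis
    unfolding exact_transf_def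
  proof (intro conjI allI impI F_nonsingular)
    fix B assume "\<forall>n. \<exists>C\<in>sets U_meas. B = (F ^^ n) -` C \<inter> space U_meas"
    then obtain D where D: "\<And>n. D n \<in> sets U_meas" "\<And>n. B = (F ^^ n) -` D n \<inter> {0..1}"
      unfolding space_U_meas by metis
    then have D_borel: "\<And>n. D n \<in> sets borel" and D_subset: "\<And>n. D n \<subseteq> {0..1}"
      by (simp_all add: sets_U_meas)
    interpret tail_chain a D
      by unfold_locales
        (rule D_borel, rule D_subset, rule tail_set_vimage_chain[OF F_image D(2) D_subset])
    have "B = D 0" using D(2)[of 0] D_subset[of 0] by auto
    then show "emeasure U_meas B = 0 \<or> emeasure U_meas (space U_meas - B) = 0"
      using U_meas_null_or_conull[OF D_borel D_subset measure_D_zero_or_one] by simp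
  qed
qed

end
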